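(* Let $(u_1,v_1),\ldots,(u_k,v_k)\in\mathbb{R}^2$ and $d\in\mathbb{R}$. Define the symmetric $2^k\times 2^k$ matrix, affine in $x,y,d$, $$L_k(x,y)\;=\;d\cdot I_{2^k}+\begin{bmatrix}x-u_1 & y-v_1\\ y-v_1 & -x+u_1\end{bmatrix}\oplus\cdots\oplus\begin{bmatrix}x-u_k & y-v_k\\ y-v_k & -x+u_k\end{bmatrix}.$$ Then (as polynomial identity, also with $d,u_i,v_i$ treated as indeterminates) $$\det L_k(x,y)\;=\;p_k(x,y):=\prod_{\sigma\in\{0,1\}^k}\Bigl(d-\sum_{i=1}^k(-1)^{\sigma_i}\sqrt{(x-u_i)^2+(y-v_i)^2}\Bigr),$$ and the convex region bounded by the $k$-ellipse satisfies $$\mathcal{E}_k:=\Bigl\{(x,y)\in\mathbb{R}^2:\sum_{i=1}^k\sqrt{(x-u_i)^2+(y-v_i)^2}\le d\Bigr\}=\{(x,y)\in\mathbb{R}^2: L_k(x,y)\succeq 0\}.$$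
   Context: The tensor (Kronecker) sum of an $m\times m$ matrix $A$ and an $n\times n$ matrix $B$ is $A\oplus B:=A\otimes I_n+I_m\otimes B$, an $mn\times mn$ matrix; it is associative, and $M_1\oplus\cdots\oplus M_k=\sum_{j}I\otimes\cdots\otimes M_j\otimes\cdots\otimes I$. $\succeq 0$ means positive semidefinite. *)

theory Defs
  imports "Jordan_Normal_Form.Determinant" "HOL-Library.FuncSet"
begin

definition kron :: "'a::semiring_0 mat \<Rightarrow> 'a mat \<Rightarrow> 'a mat" where
  "kron A B = mat (dim_row A * dim_row B) (dim_col A * dim_col B)
     (\<lambda>(i,j). A $$ (i div dim_row B, j div dim_col B) * B $$ (i mod dim_row B, j mod dim_col B))"

definition tensor_sum :: "'a::semiring_1 mat \<Rightarrow> 'a mat \<Rightarrow> 'a mat" where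
  "tensor_sum A B = kron A (1\<^sub>m (dim_row B)) + kron (1\<^sub>m (dim_row A)) B"

text \<open>Iterated tensor sum M_1 (+) ... (+) M_k (right-nested; associative).
  The empty tensor sum is the 1x1 zero matrix, the neutral element.\<close>
definition tensor_sum_list :: "'a::semiring_1 mat list \<Rightarrow> 'a mat" where
  "tensor_sum_list Ms = foldr tensor_sum Ms (0\<^sub>m 1 1)"

definition psd :: "real mat \<Rightarrow> bool" where
  "psd A \<longleftrightarrow> (\<exists>n. A \<in> carrier_mat n n \<and> A\<^sup>T = A \<and>
      (\<forall>v \<in> carrier_vec n. v \<bullet> (A *\<^sub>v v) \<ge> 0))"

definition blk :: "real \<Rightarrow> real \<Rightarrow> real \<Rightarrow> real \<Rightarrow> real mat" where
  "blk u v x y = mat_of_rows_list 2 [[x - u, y - v], [y - v, - x + u]]"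

definition Lk :: "nat \<Rightarrow> (nat \<Rightarrow> real) \<Rightarrow> (nat \<Rightarrow> real) \<Rightarrow> real \<Rightarrow> real \<Rightarrow> real \<Rightarrow> real mat" where
  "Lk k u v d x y = d \<cdot>\<^sub>m 1\<^sub>m (2^k) + tensor_sum_list (map (\<lambda>i. blk (u i) (v i) x y) [0..<k])"

end

(* The block [[a, b], [b, -a]] with r = sqrt (a^2 + b^2) is r times a reflection, so an orthogonal
   matrix conjugates it to diag (-r, r).  Conjugating by a Kronecker product of orthogonal matrices
   maps a tensor sum to the tensor sum of the conjugates, and a tensor sum of diagonal matrices is
   diagonal.  Hence L_k is orthogonally similar to the diagonal matrix with the entries
   d - sum_i (-1)^sigma_i r_i, one for each sign vector sigma, where r_i is the distance from (x, y)
   to the i-th focus.  Its determinant is the product of these entries, and it is positive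
   semidefinite iff the smallest of them, d - sum_i r_i, is nonnegative. *)

theory Submission
  imports Defs
begin

context comm_monoid_set
begin

lemma lessThan_mult_div_mod:
  fixes k n :: nat
  shows "F (\<lambda>l. g (l div k) (l mod k)) {..<n * k} = F (\<lambda>a. F (g a) {..<k}) {..<n}"
proof -
  have "F (\<lambda>l. g (l div k) (l mod k)) {a * k..<a * k + k} = F (g a) {..<k}" for a
    by (rule reindex_bij_witness[of _ "\<lambda>b. a * k + b" "\<lambda>l. l - a * k"])
      (auto simp: le_iff_add)
  then show ?thesis
    by (simp flip: nat_group)
qed

lemma PiE_lessThan_Suc:
  "F g ({..<Suc n} \<rightarrow>\<^sub>E A) = F (\<lambda>a. F (\<lambda>\<sigma>. g (case_nat a \<sigma>)) ({..<n} \<rightarrow>\<^sub>E A)) A"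
proof -
  have case_nat_split: "case_nat (\<tau> 0) (\<tau> \<circ> Suc) = \<tau>" for \<tau> :: "nat \<Rightarrow> 'b"
    by (auto simp: fun_eq_iff split: nat.split)
  have "F g ({..<Suc n} \<rightarrow>\<^sub>E A) = F (\<lambda>(a, \<sigma>). g (case_nat a \<sigma>)) (A \<times> ({..<n} \<rightarrow>\<^sub>E A))"
  proof (rule reindex_bij_witness[of _ "\<lambda>(a, \<sigma>). case_nat a \<sigma>" "\<lambda>\<tau>. (\<tau> 0, \<tau> \<circ> Suc)"])
    fix \<tau> assume "\<tau> \<in> {..<Suc n} \<rightarrow>\<^sub>E A"
    then show "(\<tau> 0, \<tau> \<circ> Suc) \<in> A \<times> ({..<n} \<rightarrow>\<^sub>E A)"
      by (auto simp: PiE_iff extensional_def)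
  next
    fix p assume "p \<in> A \<times> ({..<n} \<rightarrow>\<^sub>E A)"
    then show "(\<lambda>(a, \<sigma>). case_nat a \<sigma>) p \<in> {..<Suc n} \<rightarrow>\<^sub>E A"
      by (cases p) (auto simp: PiE_iff extensional_def less_Suc_eq_0_disj gr0_conv_Suc)
  next
    fix \<tau> assume "\<tau> \<in> {..<Suc n} \<rightarrow>\<^sub>E A"
    show "(\<lambda>(a, \<sigma>). case_nat a \<sigma>) (\<tau> 0, \<tau> \<circ> Suc) = \<tau>"
      by (simp add: case_nat_split)
    show "(\<lambda>(a, \<sigma>). g (case_nat a \<sigma>)) (\<tau> 0, \<tau> \<circ> Suc) = g \<tau>"
      by (simp add: case_nat_split)
  next
    fix p :: "'b \<times> (nat \<Rightarrow> 'b)"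
    show "(\<lambda>\<tau>. (\<tau> 0, \<tau> \<circ> Suc)) ((\<lambda>(a, \<sigma>). case_nat a \<sigma>) p) = p"
      by (cases p) (simp add: fun_eq_iff)
  qed
  then show ?thesis
    by (simp add: cartesian_product)
qed

end

lemma div_mod_less_mult:
  fixes i m n :: nat
  assumes "i < m * n"
  shows "i div n < m" and "i mod n < n"
  using assms by (simp_all add: less_mult_imp_div_less)
    (metis mod_less_divisor mult_0_right not_less_zero gr0I)

lemma nat_eq_iff_div_mod_eq: "(i :: nat) = j \<longleftrightarrow> i div n = j div n \<and> i mod n = j mod n"
  by (metis div_mult_mod_eq)

lemma dim_kron[simp]:
  "dim_row (kron A B) = dim_row A * dim_row B"
  "dim_col (kron A B) = dim_col A * dim_col B"
  unfolding kron_def by simp_all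

lemma index_kron[simp]:
  "i < dim_row A * dim_row B \<Longrightarrow> j < dim_col A * dim_col B \<Longrightarrow>
   kron A B $$ (i, j) = A $$ (i div dim_row B, j div dim_col B) * B $$ (i mod dim_row B, j mod dim_col B)"
  unfolding kron_def by simp

lemma kron_carrier_mat:
  "A \<in> carrier_mat m n \<Longrightarrow> B \<in> carrier_mat p q \<Longrightarrow> kron A B \<in> carrier_mat (m * p) (n * q)"
  by auto

lemma kron_mult:
  fixes A :: "'a::comm_semiring_0 mat"
  assumes A: "A \<in> carrier_mat m n" and B: "B \<in> carrier_mat p q"
    and C: "C \<in> carrier_mat n r" and D: "D \<in> carrier_mat q s"
  shows "kron A B * kron C D = kron (A * C) (B * D)"
proof (rule eq_matI)
  fix i j assume "i < dim_row (kron (A * C) (B * D))" and "j < dim_col (kron (A * C) (B * D))"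
  with A B C D have i: "i < m * p" and j: "j < r * s" by auto
  have dims: "dim_row A = m" "dim_col A = n" "dim_row B = p" "dim_col B = q"
    "dim_row C = n" "dim_col C = r" "dim_row D = q" "dim_col D = s"
    using A B C D by auto
  have "(kron A B * kron C D) $$ (i, j) = (\<Sum>l<n * q. kron A B $$ (i, l) * kron C D $$ (l, j))"
    using i j by (simp add: dims scalar_prod_def lessThan_atLeast0)
  also have "\<dots> = (\<Sum>l<n * q. (A $$ (i div p, l div q) * C $$ (l div q, j div s)) *
                               (B $$ (i mod p, l mod q) * D $$ (l mod q, j mod s)))"
    using i j by (intro sum.cong) (auto simp: dims mult_ac)
  also have "\<dots> = (\<Sum>a<n. \<Sum>b<q. (A $$ (i div p, a) * C $$ (a, j div s)) *
                                        (B $$ (i mod p, b) * D $$ (b, j mod s)))"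
    by (rule sum.lessThan_mult_div_mod)
  also have "\<dots> = (\<Sum>a<n. A $$ (i div p, a) * C $$ (a, j div s)) * (\<Sum>b<q. B $$ (i mod p, b) * D $$ (b, j mod s))"
    by (simp add: sum_product)
  also have "\<dots> = kron (A * C) (B * D) $$ (i, j)"
    using i j div_mod_less_mult[OF i] div_mod_less_mult[OF j]
    by (simp add: dims scalar_prod_def lessThan_atLeast0)
  finally show "(kron A B * kron C D) $$ (i, j) = kron (A * C) (B * D) $$ (i, j)" .
qed (use A B C D in auto)

lemma transpose_kron: "(kron A B)\<^sup>T = kron A\<^sup>T B\<^sup>T"
  by (rule eq_matI) (auto simp: div_mod_less_mult)

lemma kron_one: "kron (1\<^sub>m m) (1\<^sub>m n) = (1\<^sub>m (m * n) :: 'a::semiring_1 mat)"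
proof (rule eq_matI)
  fix i j assume "i < dim_row (1\<^sub>m (m * n) :: 'a mat)" and "j < dim_col (1\<^sub>m (m * n) :: 'a mat)"
  then have i: "i < m * n" and j: "j < m * n" by auto
  then show "kron (1\<^sub>m m) (1\<^sub>m n) $$ (i, j) = (1\<^sub>m (m * n) :: 'a mat) $$ (i, j)"
    using div_mod_less_mult[OF i] div_mod_less_mult[OF j] nat_eq_iff_div_mod_eq[of i j n] by simp
qed auto

lemma tensor_sum_carrier_mat:
  "A \<in> carrier_mat m m \<Longrightarrow> B \<in> carrier_mat n n \<Longrightarrow> tensor_sum A B \<in> carrier_mat (m * n) (m * n)"
  unfolding tensor_sum_def by auto

lemma kron_orthogonal:
  fixes P Q :: "'a::comm_semiring_1 mat"
  assumes P: "P \<in> carrier_mat m m" and PP: "P * P\<^sup>T = 1\<^sub>m m"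
    and Q: "Q \<in> carrier_mat n n" and QQ: "Q * Q\<^sup>T = 1\<^sub>m n"
  shows "kron P Q * (kron P Q)\<^sup>T = 1\<^sub>m (m * n)"
  using P Q by (simp add: transpose_kron kron_mult[of _ m m _ n n _ m _ n] PP QQ kron_one)

lemma tensor_sum_orthogonal_conj:
  fixes P Q A B :: "'a::comm_semiring_1 mat"
  assumes P: "P \<in> carrier_mat m m" and PP: "P * P\<^sup>T = 1\<^sub>m m" and A: "A \<in> carrier_mat m m"
    and Q: "Q \<in> carrier_mat n n" and QQ: "Q * Q\<^sup>T = 1\<^sub>m n" and B: "B \<in> carrier_mat n n"
  shows "kron P Q * tensor_sum A B * (kron P Q)\<^sup>T = tensor_sum (P * A * P\<^sup>T) (Q * B * Q\<^sup>T)"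
proof -
  have "kron P Q * kron A (1\<^sub>m n) * (kron P Q)\<^sup>T = kron (P * A * P\<^sup>T) (1\<^sub>m n)"
    using P Q A QQ by (simp add: transpose_kron kron_mult[of _ m m _ n n _ m _ n])
  moreover have "kron P Q * kron (1\<^sub>m m) B * (kron P Q)\<^sup>T = kron (1\<^sub>m m) (Q * B * Q\<^sup>T)"
    using P Q B PP by (simp add: transpose_kron kron_mult[of _ m m _ n n _ m _ n])
  moreover have "kron P Q * tensor_sum A B * (kron P Q)\<^sup>T
      = kron P Q * kron A (1\<^sub>m n) * (kron P Q)\<^sup>T + kron P Q * kron (1\<^sub>m m) B * (kron P Q)\<^sup>T"
  proof -
    have K: "kron P Q \<in> carrier_mat (m * n) (m * n)"
      and X: "kron A (1\<^sub>m n) \<in> carrier_mat (m * n) (m * n)"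
      and Y: "kron (1\<^sub>m m) B \<in> carrier_mat (m * n) (m * n)"
      using P Q A B by auto
    have "kron P Q * tensor_sum A B = kron P Q * kron A (1\<^sub>m n) + kron P Q * kron (1\<^sub>m m) B"
      using A B unfolding tensor_sum_def by (simp add: mult_add_distrib_mat[OF K X Y])
    then show ?thesis
      using K X Y by (simp add: add_mult_distrib_mat[of _ "m * n" "m * n"])
  qed
  ultimately show ?thesis
    using P A Q B unfolding tensor_sum_def by simp
qed

lemma tensor_sum_list_Cons[simp]: "tensor_sum_list (M # Ms) = tensor_sum M (tensor_sum_list Ms)"
  unfolding tensor_sum_list_def by simp

lemma tensor_sum_list_carrier_mat:
  "(\<And>M. M \<in> set Ms \<Longrightarrow> M \<in> carrier_mat n n) \<Longrightarrow>
   tensor_sum_list Ms \<in> carrier_mat (n ^ length Ms) (n ^ length Ms)"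
  by (induction Ms) (auto simp: tensor_sum_list_def intro: tensor_sum_carrier_mat)

definition kron_list :: "'a::semiring_1 mat list \<Rightarrow> 'a mat" where
  "kron_list Ps = foldr kron Ps (1\<^sub>m 1)"

lemma kron_list_Cons[simp]: "kron_list (P # Ps) = kron P (kron_list Ps)"
  unfolding kron_list_def by simp

lemma kron_list_orthogonal:
  fixes Ps :: "'a::comm_semiring_1 mat list"
  assumes "\<And>P. P \<in> set Ps \<Longrightarrow> P \<in> carrier_mat n n \<and> P * P\<^sup>T = 1\<^sub>m n"
  shows "kron_list Ps \<in> carrier_mat (n ^ length Ps) (n ^ length Ps)
    \<and> kron_list Ps * (kron_list Ps)\<^sup>T = 1\<^sub>m (n ^ length Ps)"
  using assms by (induction Ps) (auto simp: kron_list_def kron_orthogonal intro: kron_carrier_mat)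

lemma tensor_sum_list_orthogonal_conj:
  fixes P D :: "'b \<Rightarrow> 'a::comm_semiring_1 mat"
  assumes "\<And>i. i \<in> set xs \<Longrightarrow> P i \<in> carrier_mat n n \<and> P i * (P i)\<^sup>T = 1\<^sub>m n \<and> D i \<in> carrier_mat n n"
  shows "tensor_sum_list (map (\<lambda>i. P i * D i * (P i)\<^sup>T) xs)
    = kron_list (map P xs) * tensor_sum_list (map D xs) * (kron_list (map P xs))\<^sup>T"
  using assms
proof (induction xs)
  case Nil
  then show ?case by (simp add: kron_list_def tensor_sum_list_def)
next
  case (Cons i xs)
  let ?K = "kron_list (map P xs)" and ?N = "n ^ length xs"
  have i: "P i \<in> carrier_mat n n" "P i * (P i)\<^sup>T = 1\<^sub>m n" "D i \<in> carrier_mat n n"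
    using Cons.prems by auto
  have K: "?K \<in> carrier_mat ?N ?N" "?K * ?K\<^sup>T = 1\<^sub>m ?N"
    using kron_list_orthogonal[of "map P xs" n] Cons.prems by auto
  have T: "tensor_sum_list (map D xs) \<in> carrier_mat ?N ?N"
    using tensor_sum_list_carrier_mat[of "map D xs" n] Cons.prems by auto
  have "tensor_sum_list (map (\<lambda>i. P i * D i * (P i)\<^sup>T) xs) = ?K * tensor_sum_list (map D xs) * ?K\<^sup>T"
    using Cons by simp
  then show ?case
    by (simp add: tensor_sum_orthogonal_conj[OF i K T])
qed

lemma tensor_sum_mat_diag:
  "tensor_sum (mat_diag m f) (mat_diag n g)
    = mat_diag (m * n) (\<lambda>i. f (i div n) + (g (i mod n) :: 'a::semiring_1))"
proof (rule eq_matI)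
  fix i j assume "i < dim_row (mat_diag (m * n) (\<lambda>i. f (i div n) + g (i mod n)))"
    and "j < dim_col (mat_diag (m * n) (\<lambda>i. f (i div n) + g (i mod n)))"
  then have i: "i < m * n" and j: "j < m * n" by (auto simp: mat_diag_def)
  then show "tensor_sum (mat_diag m f) (mat_diag n g) $$ (i, j)
      = mat_diag (m * n) (\<lambda>i. f (i div n) + g (i mod n)) $$ (i, j)"
    using div_mod_less_mult[OF i] div_mod_less_mult[OF j] nat_eq_iff_div_mod_eq[of i j n]
    by (auto simp: tensor_sum_def mat_diag_def)
qed (auto simp: tensor_sum_def mat_diag_def)

lemma det_mat_diag: "det (mat_diag n f) = (\<Prod>i<n. f i)"
proof -
  have "upper_triangular (mat_diag n f)"
    by (auto simp: upper_triangular_def mat_diag_def)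
  then have "det (mat_diag n f) = prod_list (diag_mat (mat_diag n f))"
    by (rule det_upper_triangular[OF _ mat_diag_dim])
  also have "diag_mat (mat_diag n f) = map f [0..<n]"
    by (auto simp: diag_mat_def mat_diag_def)
  finally show ?thesis
    by (simp add: prod.list_conv_set_nth atLeast_upt)
qed

lemma det_orthogonal_conj:
  fixes Q A :: "'a::comm_ring_1 mat"
  assumes Q: "Q \<in> carrier_mat n n" and QQ: "Q * Q\<^sup>T = 1\<^sub>m n" and A: "A \<in> carrier_mat n n"
  shows "det (Q * A * Q\<^sup>T) = det A"
proof -
  have "det Q * det Q = 1"
    using det_mult[OF Q, of "Q\<^sup>T"] det_transpose[OF Q] Q by (simp add: QQ)
  moreover have "det (Q * A * Q\<^sup>T) = det Q * det A * det Q"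
    using Q A by (simp add: det_mult[of _ n] det_transpose)
  ultimately show ?thesis
    by (simp add: mult_ac)
qed

lemma psd_iff:
  assumes "A \<in> carrier_mat n n"
  shows "psd A \<longleftrightarrow> A\<^sup>T = A \<and> (\<forall>v \<in> carrier_vec n. v \<bullet> (A *\<^sub>v v) \<ge> 0)"
  using assms unfolding psd_def by auto

lemma psd_congruence:
  assumes A: "A \<in> carrier_mat n n" and Q: "Q \<in> carrier_mat m n" and "psd A"
  shows "psd (Q * A * Q\<^sup>T)"
proof -
  from \<open>psd A\<close> have sym: "A\<^sup>T = A" and nonneg: "\<And>w. w \<in> carrier_vec n \<Longrightarrow> w \<bullet> (A *\<^sub>v w) \<ge> 0"
    unfolding psd_iff[OF A] by auto
  have "(Q * A * Q\<^sup>T)\<^sup>T = Q\<^sup>T\<^sup>T * (Q * A)\<^sup>T"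
    using A Q by (intro transpose_mult[of _ m n]) auto
  also have "\<dots> = Q * (A\<^sup>T * Q\<^sup>T)"
    using A Q by (simp add: transpose_mult[of _ m n])
  also have "\<dots> = Q * A * Q\<^sup>T"
    using A Q by (simp add: sym assoc_mult_mat[of _ m n _ n _ m])
  finally have "(Q * A * Q\<^sup>T)\<^sup>T = Q * A * Q\<^sup>T" .
  moreover have "v \<bullet> ((Q * A * Q\<^sup>T) *\<^sub>v v) \<ge> 0" if v: "v \<in> carrier_vec m" for v
  proof -
    have "(Q * A * Q\<^sup>T) *\<^sub>v v = (Q * A) *\<^sub>v (Q\<^sup>T *\<^sub>v v)"
      using A Q v by (intro assoc_mult_mat_vec[of _ m n _ m]) auto
    also have "\<dots> = Q *\<^sub>v (A *\<^sub>v (Q\<^sup>T *\<^sub>v v))"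
      using A Q v by (intro assoc_mult_mat_vec[of _ m n _ n]) auto
    finally have "v \<bullet> ((Q * A * Q\<^sup>T) *\<^sub>v v) = v \<bullet> (Q *\<^sub>v (A *\<^sub>v (Q\<^sup>T *\<^sub>v v)))"
      by simp
    also have "\<dots> = (Q\<^sup>T *\<^sub>v v) \<bullet> (A *\<^sub>v (Q\<^sup>T *\<^sub>v v))"
      using A Q v by (simp add: transpose_vec_mult_scalar[of _ m n])
    finally show ?thesis
      using A Q v nonneg by simp
  qed
  ultimately show ?thesis
    using A Q by (subst psd_iff[of _ m]) auto
qed

lemma psd_orthogonal_conj_iff:
  assumes Q: "Q \<in> carrier_mat n n" and QQ: "Q * Q\<^sup>T = 1\<^sub>m n" and A: "A \<in> carrier_mat n n"
  shows "psd (Q * A * Q\<^sup>T) \<longleftrightarrow> psd A"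
proof
  assume "psd (Q * A * Q\<^sup>T)"
  then have "psd (Q\<^sup>T * (Q * A * Q\<^sup>T) * Q\<^sup>T\<^sup>T)"
    by (rule psd_congruence[of _ n, rotated 2]) (use Q A in auto)
  moreover have "Q\<^sup>T * (Q * A * Q\<^sup>T) * Q\<^sup>T\<^sup>T = A"
  proof -
    have QtQ: "Q\<^sup>T * Q = 1\<^sub>m n"
      using mat_mult_left_right_inverse[OF Q _ QQ] Q by simp
    have "Q\<^sup>T * (Q * A * Q\<^sup>T) * Q\<^sup>T\<^sup>T = (Q\<^sup>T * Q) * A * (Q\<^sup>T * Q)"
      using Q A by (simp add: assoc_mult_mat[of _ n n _ n _ n])
    then show ?thesis
      using A by (simp add: QtQ)
  qed
  ultimately show "psd A"
    by simp
qed (use Q A psd_congruence in blast)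

lemma mat_diag_mult_vec:
  assumes v: "v \<in> carrier_vec n"
  shows "mat_diag n f *\<^sub>v v = vec n (\<lambda>i. f i * v $ i)"
proof (rule eq_vecI)
  fix i assume "i < dim_vec (vec n (\<lambda>i. f i * v $ i))"
  then have i: "i < n" by simp
  have "(mat_diag n f *\<^sub>v v) $ i = (\<Sum>j\<in>{0..<n}. (if i = j then f j else 0) * v $ j)"
    using v i by (simp add: mat_diag_def scalar_prod_def)
  also have "\<dots> = (\<Sum>j\<in>{0..<n}. if i = j then f j * v $ j else 0)"
    by (rule sum.cong) auto
  finally show "(mat_diag n f *\<^sub>v v) $ i = vec n (\<lambda>i. f i * v $ i) $ i"
    using i by simp
qed (use v in \<open>simp add: mat_diag_def\<close>)

lemma psd_mat_diag_iff: "psd (mat_diag n f) \<longleftrightarrow> (\<forall>i<n. 0 \<le> f i)"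
proof -
  have quad: "v \<bullet> (mat_diag n f *\<^sub>v v) = (\<Sum>i<n. f i * (v $ i)\<^sup>2)" if "v \<in> carrier_vec n" for v
    using that by (simp add: mat_diag_mult_vec scalar_prod_def power2_eq_square lessThan_atLeast0 mult_ac)
  have "(\<forall>v \<in> carrier_vec n. v \<bullet> (mat_diag n f *\<^sub>v v) \<ge> 0) \<longleftrightarrow> (\<forall>i<n. 0 \<le> f i)"
  proof
    assume "\<forall>v \<in> carrier_vec n. v \<bullet> (mat_diag n f *\<^sub>v v) \<ge> 0"
    then have "0 \<le> unit_vec n i \<bullet> (mat_diag n f *\<^sub>v unit_vec n i)" for i
      by simp
    moreover have "unit_vec n i \<bullet> (mat_diag n f *\<^sub>v unit_vec n i) = f i" if "i < n" for i
      using that by (simp add: mat_diag_mult_vec)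
    ultimately show "\<forall>i<n. 0 \<le> f i"
      by metis
  next
    assume "\<forall>i<n. 0 \<le> f i"
    then show "\<forall>v \<in> carrier_vec n. v \<bullet> (mat_diag n f *\<^sub>v v) \<ge> 0"
      by (auto simp: quad intro!: sum_nonneg)
  qed
  moreover have "(mat_diag n f)\<^sup>T = mat_diag n f"
    by (auto simp: mat_diag_def)
  ultimately show ?thesis
    by (simp add: psd_iff[OF mat_diag_dim])
qed

definition mat2 :: "'a \<Rightarrow> 'a \<Rightarrow> 'a \<Rightarrow> 'a \<Rightarrow> 'a mat" where
  "mat2 a b c d = mat_of_rows_list 2 [[a, b], [c, d]]"

lemma less_2_iff: "(i :: nat) < 2 \<longleftrightarrow> i = 0 \<or> i = 1"
  by auto

lemma index_mat2:
  "i < 2 \<Longrightarrow> j < 2 \<Longrightarrow>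
   mat2 a b c d $$ (i, j) = (if i = 0 then if j = 0 then a else b else if j = 0 then c else d)"
  unfolding mat2_def mat_of_rows_list_def by (auto simp: less_2_iff)

lemma dim_mat2[simp]: "dim_row (mat2 a b c d) = 2" "dim_col (mat2 a b c d) = 2"
  unfolding mat2_def mat_of_rows_list_def by simp_all

lemma mat2_carrier_mat[simp]: "mat2 a b c d \<in> carrier_mat 2 2"
  unfolding carrier_mat_def by simp

lemma mat2_mult:
  "mat2 a b c d * mat2 a' b' c' d' = mat2 (a * a' + b * c') (a * b' + b * d') (c * a' + d * c') (c * b' + d * d')"
  by (rule eq_matI) (auto simp: index_mat2 less_2_iff scalar_prod_def numeral_2_eq_2)

lemma transpose_mat2: "(mat2 a b c d)\<^sup>T = mat2 a c b d"
  by (rule eq_matI) (auto simp: index_mat2 less_2_iff)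

lemma one_mat2: "1\<^sub>m 2 = mat2 1 0 0 1"
  by (rule eq_matI) (auto simp: index_mat2 less_2_iff)

lemma mat_diag_2: "mat_diag 2 f = mat2 (f 0) 0 0 (f 1)"
  by (rule eq_matI) (auto simp: index_mat2 less_2_iff mat_diag_def)

lemma blk_eq_mat2: "blk u v x y = mat2 (x - u) (y - v) (y - v) (- (x - u))"
  by (simp add: blk_def mat2_def)

lemma polar_Ex_sqrt:
  fixes a b :: real
  obtains t where "a = sqrt (a\<^sup>2 + b\<^sup>2) * cos t" and "b = sqrt (a\<^sup>2 + b\<^sup>2) * sin t"
proof -
  have "rcis (cmod (Complex a b)) (Arg (Complex a b)) = Complex a b"
    by (rule rcis_cmod_Arg)
  then show ?thesis
    using that by (metis complex.sel cmod_def Re_rcis Im_rcis)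
qed

text \<open>With \<open>(a, b) = r (cos t, sin t)\<close> the matrix is \<open>r\<close> times the reflection in the line
  of angle \<open>t / 2\<close>; the columns of \<open>P\<close> are the unit normal and the unit direction of that line.\<close>
lemma scaled_reflection_diagonalization:
  fixes a b :: real
  obtains P where "P \<in> carrier_mat 2 2" and "P * P\<^sup>T = 1\<^sub>m 2"
    and "mat2 a b b (- a) = P * mat_diag 2 (\<lambda>j. - ((-1) ^ j * sqrt (a\<^sup>2 + b\<^sup>2))) * P\<^sup>T"
proof -
  define r where "r = sqrt (a\<^sup>2 + b\<^sup>2)"
  obtain t where t: "a = r * cos t" "b = r * sin t"
    using polar_Ex_sqrt[of a b] unfolding r_def by blast
  define h where "h = t / 2"
  define P where "P = mat2 (- sin h) (cos h) (cos h) (sin h)"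
  have "a = r * (cos h ^ 2 - sin h ^ 2)" "b = r * (2 * sin h * cos h)"
    using t cos_double[of h] sin_double[of h] by (simp_all add: h_def)
  moreover have "P * mat_diag 2 (\<lambda>j. - ((-1) ^ j * r)) * P\<^sup>T
      = mat2 (r * (cos h ^ 2 - sin h ^ 2)) (r * (2 * sin h * cos h))
             (r * (2 * sin h * cos h)) (- (r * (cos h ^ 2 - sin h ^ 2)))"
    by (simp add: P_def mat_diag_2 transpose_mat2 mat2_mult power2_eq_square algebra_simps)
  ultimately have "mat2 a b b (- a) = P * mat_diag 2 (\<lambda>j. - ((-1) ^ j * r)) * P\<^sup>T"
    by simp
  moreover have "P * P\<^sup>T = 1\<^sub>m 2"
    using sin_cos_squared_add[of h]
    by (simp add: P_def transpose_mat2 mat2_mult one_mat2 power2_eq_square algebra_simps)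
  moreover have "P \<in> carrier_mat 2 2"
    by (simp add: P_def)
  ultimately show ?thesis
    using that unfolding r_def by blast
qed

text \<open>The binary digits of \<open>j\<close>, most significant first, choose the signs; this is the index
  order of \<^const>\<open>kron\<close>, whose first factor varies slowest.\<close>
fun signed_sum :: "'a::comm_ring_1 list \<Rightarrow> nat \<Rightarrow> 'a" where
  "signed_sum [] j = 0"
| "signed_sum (r # rs) j = (-1) ^ (j div 2 ^ length rs) * r + signed_sum rs (j mod 2 ^ length rs)"

lemma tensor_sum_list_sign_diag:
  "tensor_sum_list (map (\<lambda>r. mat_diag 2 (\<lambda>j. - ((-1) ^ j * r))) rs)
    = mat_diag (2 ^ length rs) (\<lambda>j. - signed_sum rs j)"
proof (induction rs)
  case Nil
  show ?case
    by (rule eq_matI) (auto simp: tensor_sum_list_def mat_diag_def)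
next
  case (Cons r rs)
  then show ?case
    by (simp add: tensor_sum_mat_diag)
qed

lemma prod_signed_sum:
  fixes f :: "'a::comm_ring_1 \<Rightarrow> 'b::comm_monoid_mult"
  shows "(\<Prod>j<2 ^ length rs. f (signed_sum rs j))
    = (\<Prod>\<sigma>\<in>{..<length rs} \<rightarrow>\<^sub>E {0, 1}. f (\<Sum>i<length rs. (-1) ^ \<sigma> i * rs ! i))"
proof (induction rs arbitrary: f)
  case Nil
  then show ?case by simp
next
  case (Cons r rs)
  let ?n = "length rs"
  have "(\<Prod>j<2 ^ length (r # rs). f (signed_sum (r # rs) j))
      = (\<Prod>j<2 * 2 ^ ?n. f ((-1) ^ (j div 2 ^ ?n) * r + signed_sum rs (j mod 2 ^ ?n)))"
    by simp
  also have "\<dots> = (\<Prod>a<2. \<Prod>b<2 ^ ?n. f ((-1) ^ a * r + signed_sum rs b))"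
    by (rule prod.lessThan_mult_div_mod)
  also have "\<dots> = (\<Prod>a<2. \<Prod>\<sigma>\<in>{..<?n} \<rightarrow>\<^sub>E {0, 1}. f ((-1) ^ a * r + (\<Sum>i<?n. (-1) ^ \<sigma> i * rs ! i)))"
    using Cons.IH[of "\<lambda>t. f ((-1) ^ a * r + t)" for a] by simp
  also have "\<dots> = (\<Prod>a\<in>{0, 1}. \<Prod>\<sigma>\<in>{..<?n} \<rightarrow>\<^sub>E {0, 1}.
      f (\<Sum>i<Suc ?n. (-1) ^ case_nat a \<sigma> i * (r # rs) ! i))"
  proof -
    have two: "{..<2::nat} = {0, 1}" by auto
    show ?thesis
      unfolding two
      by (intro prod.cong refl arg_cong[where f = f]) (simp only: sum.lessThan_Suc_shift, simp)
  qed
  also have "\<dots> = (\<Prod>\<sigma>\<in>{..<length (r # rs)} \<rightarrow>\<^sub>E {0, 1}. f (\<Sum>i<length (r # rs). (-1) ^ \<sigma> i * (r # rs) ! i))"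
    by (simp add: prod.PiE_lessThan_Suc)
  finally show ?case .
qed

lemma signed_sum_0: "signed_sum rs 0 = sum_list rs"
  by (induction rs) auto

lemma signed_sum_le_sum_list:
  fixes rs :: "'a::linordered_idom list"
  assumes "\<And>r. r \<in> set rs \<Longrightarrow> 0 \<le> r"
  shows "signed_sum rs j \<le> sum_list rs"
  using assms
proof (induction rs arbitrary: j)
  case Nil
  then show ?case by simp
next
  case (Cons r rs)
  have "(-1) ^ (j div 2 ^ length rs) * r \<le> r"
    using Cons.prems by (cases "even (j div 2 ^ length rs)") auto
  moreover have "signed_sum rs (j mod 2 ^ length rs) \<le> sum_list rs"
    using Cons by simp
  ultimately show ?case
    by simp
qed

lemma signed_sum_le_iff:
  fixes rs :: "'a::linordered_idom list"
  assumes "\<And>r. r \<in> set rs \<Longrightarrow> 0 \<le> r"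
  shows "(\<forall>j<2 ^ length rs. signed_sum rs j \<le> c) \<longleftrightarrow> sum_list rs \<le> c"
proof
  assume "\<forall>j<2 ^ length rs. signed_sum rs j \<le> c"
  then show "sum_list rs \<le> c"
    by (metis signed_sum_0 zero_less_numeral zero_less_power)
next
  assume "sum_list rs \<le> c"
  then show "\<forall>j<2 ^ length rs. signed_sum rs j \<le> c"
    using signed_sum_le_sum_list[OF assms] order_trans by blast
qed

lemma smult_one_add_orthogonal_conj:
  fixes Q :: "'a::comm_ring_1 mat"
  assumes Q: "Q \<in> carrier_mat n n" and QQ: "Q * Q\<^sup>T = 1\<^sub>m n"
  shows "c \<cdot>\<^sub>m 1\<^sub>m n + Q * mat_diag n f * Q\<^sup>T = Q * mat_diag n (\<lambda>j. c + f j) * Q\<^sup>T"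
proof -
  have "Q * mat_diag n (\<lambda>j. c + f j) = Q * (c \<cdot>\<^sub>m 1\<^sub>m n + mat_diag n f)"
    by (rule arg_cong[where f = "(*) Q"], rule eq_matI) (auto simp: mat_diag_def)
  also have "\<dots> = Q * (c \<cdot>\<^sub>m 1\<^sub>m n) + Q * mat_diag n f"
    using Q by (intro mult_add_distrib_mat) auto
  also have "Q * (c \<cdot>\<^sub>m 1\<^sub>m n) = c \<cdot>\<^sub>m Q"
    using Q by (simp add: mult_smult_distrib[OF Q one_carrier_mat])
  finally have "Q * mat_diag n (\<lambda>j. c + f j) = c \<cdot>\<^sub>m Q + Q * mat_diag n f" .
  then show ?thesis
    using Q QQ by (simp add: add_mult_distrib_mat[of _ n n] mult_smult_assoc_mat[of _ n n])
qed

definition focal_distances :: "nat \<Rightarrow> (nat \<Rightarrow> real) \<Rightarrow> (nat \<Rightarrow> real) \<Rightarrow> real \<Rightarrow> real \<Rightarrow> real list" where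
  "focal_distances k u v x y = map (\<lambda>i. sqrt ((x - u i)\<^sup>2 + (y - v i)\<^sup>2)) [0..<k]"

lemma Lk_orthogonal_diagonalization:
  obtains Q where "Q \<in> carrier_mat (2 ^ k) (2 ^ k)" and "Q * Q\<^sup>T = 1\<^sub>m (2 ^ k)"
    and "Lk k u v d x y = Q * mat_diag (2 ^ k) (\<lambda>j. d - signed_sum (focal_distances k u v x y) j) * Q\<^sup>T"
proof -
  define r where "r i = sqrt ((x - u i)\<^sup>2 + (y - v i)\<^sup>2)" for i
  define D where "D = (\<lambda>i. mat_diag 2 (\<lambda>j. - ((-1) ^ j * r i)))"
  have "\<exists>P. P \<in> carrier_mat 2 2 \<and> P * P\<^sup>T = 1\<^sub>m 2 \<and> blk (u i) (v i) x y = P * D i * P\<^sup>T" for i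
    using scaled_reflection_diagonalization[of "x - u i" "y - v i"]
    unfolding blk_eq_mat2 D_def r_def by metis
  then obtain P where P: "\<And>i. P i \<in> carrier_mat 2 2" "\<And>i. P i * (P i)\<^sup>T = 1\<^sub>m 2"
    and blk: "\<And>i. blk (u i) (v i) x y = P i * D i * (P i)\<^sup>T"
    by metis
  define Q where "Q = kron_list (map P [0..<k])"
  have Q: "Q \<in> carrier_mat (2 ^ k) (2 ^ k)" "Q * Q\<^sup>T = 1\<^sub>m (2 ^ k)"
    using kron_list_orthogonal[of "map P [0..<k]" 2] P unfolding Q_def by auto
  have "tensor_sum_list (map (\<lambda>i. blk (u i) (v i) x y) [0..<k])
      = Q * tensor_sum_list (map D [0..<k]) * Q\<^sup>T"
    unfolding blk Q_def using P by (intro tensor_sum_list_orthogonal_conj) (auto simp: D_def)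
  also have "tensor_sum_list (map D [0..<k])
      = mat_diag (2 ^ k) (\<lambda>j. - signed_sum (focal_distances k u v x y) j)"
    using tensor_sum_list_sign_diag[of "focal_distances k u v x y"]
    by (simp add: focal_distances_def D_def r_def comp_def)
  finally have "Lk k u v d x y
      = Q * mat_diag (2 ^ k) (\<lambda>j. d - signed_sum (focal_distances k u v x y) j) * Q\<^sup>T"
    unfolding Lk_def using smult_one_add_orthogonal_conj[OF Q] by simp
  with Q that show ?thesis
    by blast
qed

lemma det_Lk:
  "det (Lk k u v d x y) =
     (\<Prod>\<sigma>\<in>{..<k} \<rightarrow>\<^sub>E {0::nat, 1}. d - (\<Sum>i<k. (-1) ^ (\<sigma> i) * sqrt ((x - u i)\<^sup>2 + (y - v i)\<^sup>2)))"
proof -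
  obtain Q where Q: "Q \<in> carrier_mat (2 ^ k) (2 ^ k)" "Q * Q\<^sup>T = 1\<^sub>m (2 ^ k)"
    and L: "Lk k u v d x y = Q * mat_diag (2 ^ k) (\<lambda>j. d - signed_sum (focal_distances k u v x y) j) * Q\<^sup>T"
    by (rule Lk_orthogonal_diagonalization)
  have "det (Lk k u v d x y) = (\<Prod>j<2 ^ k. d - signed_sum (focal_distances k u v x y) j)"
    unfolding L by (simp add: det_orthogonal_conj[OF Q] det_mat_diag)
  also have "\<dots> = (\<Prod>\<sigma>\<in>{..<k} \<rightarrow>\<^sub>E {0, 1}. d - (\<Sum>i<k. (-1) ^ \<sigma> i * focal_distances k u v x y ! i))"
    using prod_signed_sum[of "\<lambda>t. d - t" "focal_distances k u v x y"]
    by (simp add: focal_distances_def)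
  also have "\<dots> = (\<Prod>\<sigma>\<in>{..<k} \<rightarrow>\<^sub>E {0, 1}. d - (\<Sum>i<k. (-1) ^ \<sigma> i * sqrt ((x - u i)\<^sup>2 + (y - v i)\<^sup>2)))"
    by (intro prod.cong refl arg_cong[where f = "\<lambda>t. d - t"] sum.cong) (simp_all add: focal_distances_def)
  finally show ?thesis .
qed

lemma psd_Lk_iff:
  "psd (Lk k u v d x y) \<longleftrightarrow> (\<Sum>i<k. sqrt ((x - u i)\<^sup>2 + (y - v i)\<^sup>2)) \<le> d"
proof -
  obtain Q where Q: "Q \<in> carrier_mat (2 ^ k) (2 ^ k)" "Q * Q\<^sup>T = 1\<^sub>m (2 ^ k)"
    and L: "Lk k u v d x y = Q * mat_diag (2 ^ k) (\<lambda>j. d - signed_sum (focal_distances k u v x y) j) * Q\<^sup>T"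
    by (rule Lk_orthogonal_diagonalization)
  have "psd (Lk k u v d x y) \<longleftrightarrow> (\<forall>j<2 ^ k. signed_sum (focal_distances k u v x y) j \<le> d)"
    unfolding L by (simp add: psd_orthogonal_conj_iff[OF Q] psd_mat_diag_iff)
  also have "\<dots> \<longleftrightarrow> sum_list (focal_distances k u v x y) \<le> d"
  proof -
    have "\<And>r. r \<in> set (focal_distances k u v x y) \<Longrightarrow> 0 \<le> r"
      by (auto simp: focal_distances_def)
    moreover have "length (focal_distances k u v x y) = k"
      by (simp add: focal_distances_def)
    ultimately show ?thesis
      using signed_sum_le_iff by metis
  qed
  also have "sum_list (focal_distances k u v x y) = (\<Sum>i<k. sqrt ((x - u i)\<^sup>2 + (y - v i)\<^sup>2))"
    by (simp add: focal_distances_def sum_list_distinct_conv_sum_set atLeast_upt)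
  finally show ?thesis .
qed

theorem theorem2p3:
  fixes k :: nat and u v :: "nat \<Rightarrow> real" and d :: real
  shows "(\<forall>x y. det (Lk k u v d x y) =
            (\<Prod>\<sigma>\<in>{..<k} \<rightarrow>\<^sub>E {0::nat, 1}.
               d - (\<Sum>i<k. (-1) ^ (\<sigma> i) * sqrt ((x - u i)^2 + (y - v i)^2))))
       \<and> {(x, y). (\<Sum>i<k. sqrt ((x - u i)^2 + (y - v i)^2)) \<le> d}
         = {(x, y). psd (Lk k u v d x y)}"
  using det_Lk psd_Lk_iff by auto

end
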